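(* Let $G$ be a graph such that $D_2(G)$ is connected. Then $\mathrm{diam}(D_2(G))\geqslant \left\lceil \tfrac{1}{2}\mathrm{diam}(G)\right\rceil$.
   Context: All graphs are finite, simple and undirected. For a graph $G$, $\mathrm{d}_G(x,y)$ denotes the length of a shortest path between $x$ and $y$, and $\mathrm{diam}(G)$ is the maximum distance between vertices of $G$. The $2$-distance graph $D_2(G)$ of $G$ is the graph with vertex set $V(G)$ in which two vertices $x,y$ are adjacent if and only if $\mathrm{d}_G(x,y)=2$. *)

theory Defs
  imports Main "HOL-Library.Extended_Nat"
begin

definition simple_graph :: "'a set \<Rightarrow> ('a \<Rightarrow> 'a \<Rightarrow> bool) \<Rightarrow> bool" where
  "simple_graph V E \<longleftrightarrow> finite V \<and> (\<forall>x y. E x y \<longrightarrow> x \<in> V \<and> y \<in> V)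
     \<and> (\<forall>x y. E x y \<longrightarrow> E y x) \<and> (\<forall>x. \<not> E x x)"

text \<open>Distance: length of a shortest walk (= shortest path); infinity if none.\<close>
definition gdist :: "('a \<Rightarrow> 'a \<Rightarrow> bool) \<Rightarrow> 'a \<Rightarrow> 'a \<Rightarrow> enat" where
  "gdist E x y = (INF n \<in> {n. (E ^^ n) x y}. enat n)"

definition gdiam :: "'a set \<Rightarrow> ('a \<Rightarrow> 'a \<Rightarrow> bool) \<Rightarrow> enat" where
  "gdiam V E = (SUP x \<in> V. SUP y \<in> V. gdist E x y)"

definition D2 :: "'a set \<Rightarrow> ('a \<Rightarrow> 'a \<Rightarrow> bool) \<Rightarrow> 'a \<Rightarrow> 'a \<Rightarrow> bool" where
  "D2 V E x y \<longleftrightarrow> x \<in> V \<and> y \<in> V \<and> gdist E x y = 2"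

definition gconnected :: "'a set \<Rightarrow> ('a \<Rightarrow> 'a \<Rightarrow> bool) \<Rightarrow> bool" where
  "gconnected V E \<longleftrightarrow> V \<noteq> {} \<and> (\<forall>x\<in>V. \<forall>y\<in>V. E\<^sup>*\<^sup>* x y)"

end

theory Submission
  imports Defs
begin

text \<open>Every edge of D2(G) joins two vertices at distance 2 in G, so a shortest walk in D2(G)
expands to a walk in G of twice its length: d_G(x, y) \<le> 2 d_D2(G)(x, y). Taking suprema gives
diam(G) \<le> 2 diam(D2(G)).\<close>

lemma gdist_le:
  assumes "(E ^^ n) x y"
  shows "gdist E x y \<le> enat n"
  unfolding gdist_def using assms by (intro INF_lower) simp

lemma gdist_eq_enatD:
  assumes "gdist E x y = enat n"
  shows "(E ^^ n) x y"
proof -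
  have "gdist E x y \<noteq> \<infinity>" using assms by simp
  then obtain k where "(E ^^ k) x y" unfolding gdist_def by (force simp: top_enat_def)
  then have "gdist E x y \<in> enat ` {n. (E ^^ n) x y}"
    unfolding gdist_def by (intro wellorder_InfI) blast
  with assms show ?thesis by auto
qed

lemma relpowp_mult_if_le_relpowp:
  fixes R S :: "'a \<Rightarrow> 'a \<Rightarrow> bool" and m :: nat
  assumes "\<And>x y. R x y \<Longrightarrow> (S ^^ m) x y" and "(R ^^ k) x y"
  shows "(S ^^ (m * k)) x y"
  using assms(2)
proof (induction k arbitrary: y)
  case 0
  then show ?case by simp
next
  case (Suc k)
  then obtain z where "(R ^^ k) x z" and "R z y" by auto
  then have "(S ^^ (m * k) OO S ^^ m) x y" using Suc.IH assms(1) by blast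
  then show ?case by (metis relpowp_add mult_Suc_right add.commute)
qed

lemma gdist_le_mult_gdist:
  fixes R S :: "'a \<Rightarrow> 'a \<Rightarrow> bool" and m :: nat
  assumes "\<And>x y. R x y \<Longrightarrow> (S ^^ m) x y" and "0 < m" \<comment> \<open>as \<open>0 * \<infinity> = 0\<close> in \<open>enat\<close>\<close>
  shows "gdist S x y \<le> enat m * gdist R x y"
proof (cases "gdist R x y")
  case (enat k)
  have "(S ^^ (m * k)) x y"
    using assms(1) gdist_eq_enatD[OF enat] by (rule relpowp_mult_if_le_relpowp)
  then show ?thesis using enat by (simp add: gdist_le)
next
  case infinity
  then show ?thesis using \<open>0 < m\<close> by (simp add: enat_0_iff(1))
qed

lemma gdiam_le_mult_gdiam:
  fixes R S :: "'a \<Rightarrow> 'a \<Rightarrow> bool" and m :: nat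
  assumes "\<And>x y. R x y \<Longrightarrow> (S ^^ m) x y" and "0 < m"
  shows "gdiam V S \<le> enat m * gdiam V R"
  unfolding gdiam_def
proof (intro SUP_least)
  fix x y assume "x \<in> V" and "y \<in> V"
  then have "gdist R x y \<le> (SUP x \<in> V. SUP y \<in> V. gdist R x y)"
    by (meson SUP_upper2 order_refl)
  then have "enat m * gdist R x y \<le> enat m * (SUP x \<in> V. SUP y \<in> V. gdist R x y)"
    by (rule mult_left_mono) simp
  then show "gdist S x y \<le> enat m * (SUP x \<in> V. SUP y \<in> V. gdist R x y)"
    using gdist_le_mult_gdist[OF assms] by (rule order_trans[rotated])
qed

lemma D2_imp_relpowp_2:
  assumes "D2 V E x y"
  shows "(E ^^ 2) x y"
  using assms gdist_eq_enatD[of E x y 2] by (simp add: D2_def numeral_eq_enat)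

lemma gdiam_le_2_gdiam_D2: "gdiam V E \<le> 2 * gdiam V (D2 V E)"
proof -
  have "gdiam V E \<le> enat 2 * gdiam V (D2 V E)"
    using D2_imp_relpowp_2 by (rule gdiam_le_mult_gdiam) auto
  then show ?thesis by (simp add: numeral_eq_enat)
qed

lemma enat_ceiling_half_le:
  fixes a b :: enat
  assumes "a \<le> 2 * b"
  shows "enat (nat \<lceil>real (the_enat a) / 2\<rceil>) \<le> b"
proof (cases b)
  case (enat m)
  with assms obtain d where "a = enat d" and "d \<le> 2 * m"
    by (metis enat_ile enat_numeral times_enat_simps(1) enat_ord_simps(1))
  moreover have "\<lceil>real d / 2\<rceil> \<le> int m" if "d \<le> 2 * m"
    using that by linarith
  ultimately show ?thesis using enat by simp
qed simp

theorem theorem2p5: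
  fixes V :: "'a set" and E :: "'a \<Rightarrow> 'a \<Rightarrow> bool"
  assumes "simple_graph V E"
    and "gconnected V (D2 V E)"
  shows "enat (nat \<lceil>real (the_enat (gdiam V E)) / 2\<rceil>) \<le> gdiam V (D2 V E)"
  using gdiam_le_2_gdiam_D2 by (rule enat_ceiling_half_le)

end
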